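(* Let $\ell$ be a positive odd integer with at most $t$ distinct prime factors. Suppose that for $i=1,\dots,s$ there are primes $p_{i,1}<p_{i,2}<\cdots<p_{i,t+1}$ with $p_{i,1}\ge 3$, such that for each $i$ any two of $p_{i,1}-1,\dots,p_{i,t+1}-1$ have no common odd prime factor, and such that $p_{i+1,t+1}<2p_{i,1}$ for $1\le i\le s-1$. Then for every integer $n$ with $p_{1,t+1}-1\le n\le 2p_{s,1}-2$, $\Omega_\ell(n)$ is not a powerful number.
   Context: A positive integer $a$ is called a powerful number if for every prime $p$, $p\mid a$ implies $p^2\mid a$. $\Omega_\ell(n)=\prod_{a=1}^{n}(a^\ell+1)$. *)

theory Defs
  imports "HOL-Computational_Algebra.Primes"
begin

definition powerful :: "nat \<Rightarrow> bool" where
  "powerful a \<longleftrightarrow> a > 0 \<and> (\<forall>p. prime p \<and> p dvd a \<longrightarrow> p^2 dvd a)"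

definition Omega :: "nat \<Rightarrow> nat \<Rightarrow> nat" where
  "Omega l n = (\<Prod>a=1..n. a ^ l + 1)"

end

theory Submission
  imports Defs "HOL-Number_Theory.Number_Theory"
begin

text \<open>
  Let \<open>q\<close> be an odd prime with \<open>q \<nmid> l\<close> and \<open>gcd(l, q - 1) = 1\<close>. Then \<open>a \<mapsto> a\<^sup>l\<close> is a
  bijection modulo \<open>q\<close>, so \<open>q \<mid> a\<^sup>l + 1\<close> forces \<open>a \<equiv> -1 (mod q)\<close>; for \<open>q - 1 \<le> n \<le> 2q - 2\<close>
  the only such factor of \<open>\<Omega>\<^sub>l(n)\<close> is \<open>a = q - 1\<close>, and \<open>(q - 1)\<^sup>l + 1 \<equiv> l q (mod q\<^sup>2)\<close>,
  so \<open>q\<close> divides \<open>\<Omega>\<^sub>l(n)\<close> exactly once.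
  The chain condition puts every admissible \<open>n\<close> into the window
  \<open>p(i, t + 1) - 1 \<le> n \<le> 2 p(i, 1) - 2\<close> of some block \<open>i\<close>, which is then a window for
  every prime \<open>q = p(i, j)\<close> of that block. Charging each \<open>q\<close> that violates one of the two
  conditions to a prime factor of \<open>l\<close> (a common factor with \<open>q - 1\<close>, or \<open>q\<close> itself) is
  injective, so with only \<open>t\<close> prime factors some \<open>q\<close> among the \<open>t + 1\<close> satisfies both.
\<close>

lemma square_dvd_one_minus_power:
  fixes x :: int
  shows "x\<^sup>2 dvd (1 - x) ^ k - (1 - int k * x)"
proof (induction k)
  case 0
  then show ?case by simp
next
  case (Suc k)
  then obtain m where m: "(1 - x) ^ k = 1 - int k * x + x\<^sup>2 * m"
    by (metis dvd_def diff_eq_eq add.commute)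
  have "(1 - x) ^ Suc k - (1 - int (Suc k) * x) = x\<^sup>2 * (int k + (1 - x) * m)"
    by (simp add: m power2_eq_square algebra_simps)
  then show ?case by simp
qed

lemma prime_square_not_dvd_pred_power_plus_one:
  fixes q l :: nat
  assumes "prime q" "odd l" "\<not> q dvd l"
  shows "\<not> q\<^sup>2 dvd (q - 1) ^ l + 1"
proof
  assume "q\<^sup>2 dvd (q - 1) ^ l + 1"
  hence "int (q\<^sup>2) dvd int ((q - 1) ^ l + 1)" by (simp only: int_dvd_int_iff)
  hence "(int q)\<^sup>2 dvd (int q - 1) ^ l + 1"
    using prime_ge_1_nat[OF assms(1)] by (simp add: of_nat_diff add.commute)
  also have "(int q - 1) ^ l + 1 = 1 - (1 - int q) ^ l"
    using power_minus_odd[OF \<open>odd l\<close>, of "1 - int q"] by simp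
  finally have sq_dvd: "(int q)\<^sup>2 dvd 1 - (1 - int q) ^ l" .
  obtain m where m: "(1 - int q) ^ l - (1 - int l * int q) = (int q)\<^sup>2 * m"
    using square_dvd_one_minus_power[of "int q" l] by (auto simp: dvd_def)
  have "(int q)\<^sup>2 dvd (1 - (1 - int q) ^ l) + (int q)\<^sup>2 * m"
    using sq_dvd by simp
  also have "(1 - (1 - int q) ^ l) + (int q)\<^sup>2 * m = int q * int l"
    using m by (simp add: algebra_simps)
  finally have "int q * int q dvd int q * int l" by (simp add: power2_eq_square)
  hence "int q dvd int l" using prime_gt_0_nat[OF assms(1)] by simp
  thus False using assms(3) by simp
qed

text \<open>Since \<open>l u \<equiv> 1 (mod q - 1)\<close> for some odd \<open>u\<close>, Fermat gives \<open>a \<equiv> a\<^sup>l\<^sup>u \<equiv> (-1)\<^sup>u = -1\<close>.\<close>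

lemma prime_dvd_power_plus_one_imp_dvd_plus_one:
  fixes q l a :: nat
  assumes "prime q" "odd q" "odd l" "coprime l (q - 1)" and dvd: "q dvd a ^ l + 1"
  shows "q dvd a + 1"
proof -
  have "l \<noteq> 0" using odd_pos[OF \<open>odd l\<close>] by simp
  have "\<not> q dvd a"
  proof
    assume "q dvd a"
    hence "q dvd a ^ l" using \<open>l \<noteq> 0\<close> by (meson dvd_power dvd_trans gr0I)
    with dvd have "q dvd 1" by (metis dvd_add_right_iff)
    thus False using \<open>prime q\<close> by simp
  qed
  obtain u v where uv: "l * u = (q - 1) * v + 1"
    using bezout_nat[OF \<open>l \<noteq> 0\<close>, of "q - 1"] \<open>coprime l (q - 1)\<close> by auto
  have "even (q - 1)" using \<open>odd q\<close> by simp
  hence "odd (l * u)" unfolding uv by simp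
  hence "odd u" by simp
  have "[a ^ (q - 1) = 1] (mod q)" using fermat_theorem[OF \<open>prime q\<close> \<open>\<not> q dvd a\<close>] .
  hence "[(a ^ (q - 1)) ^ v * a = 1 ^ v * a] (mod q)" by (intro cong_mult cong_pow) auto
  hence "[a ^ (l * u) = a] (mod q)" by (simp only: uv power_add power_mult) simp
  hence a_lu: "[(int a) ^ (l * u) = int a] (mod int q)" by (metis cong_int_iff of_nat_power)
  have "[(int a) ^ l = -1] (mod int q)"
    using dvd by (simp add: cong_iff_dvd_diff) (metis of_nat_dvd_iff of_nat_power of_nat_Suc add.commute)
  hence "[((int a) ^ l) ^ u = (-1) ^ u] (mod int q)" by (rule cong_pow)
  hence "[(int a) ^ (l * u) = -1] (mod int q)" using \<open>odd u\<close> by (simp add: power_mult)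
  hence "[int a = -1] (mod int q)" using a_lu by (metis cong_sym cong_trans)
  hence "int q dvd int a + 1" by (simp add: cong_iff_dvd_diff)
  thus ?thesis by (metis of_nat_1 of_nat_add of_nat_dvd_iff)
qed

lemma prime_dvd_power_plus_one_imp_eq_pred:
  fixes q l a :: nat
  assumes "prime q" "odd q" "odd l" "coprime l (q - 1)" "q dvd a ^ l + 1" "a \<le> 2 * q - 2"
  shows "a = q - 1"
proof -
  obtain k where k: "a + 1 = q * k"
    using prime_dvd_power_plus_one_imp_dvd_plus_one[OF assms(1-5)] by (auto simp: dvd_def)
  have "k \<noteq> 0" using k by (metis add_is_0 mult_0_right one_neq_zero)
  moreover have "k < 2"
  proof (rule ccontr)
    assume "\<not> k < 2"
    hence "q * 2 \<le> q * k" by simp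
    thus False using k \<open>a \<le> 2 * q - 2\<close> prime_gt_0_nat[OF \<open>prime q\<close>] by linarith
  qed
  ultimately have "k = 1" by simp
  thus ?thesis using k by simp
qed

lemma Omega_not_powerful:
  fixes q l n :: nat
  assumes "prime q" "odd q" "odd l" "coprime l (q - 1)" "\<not> q dvd l"
    and "q - 1 \<le> n" "n \<le> 2 * q - 2"
  shows "\<not> powerful (Omega l n)"
proof -
  define R where "R = (\<Prod>a\<in>{1..n} - {q - 1}. a ^ l + 1)"
  have "q \<ge> 3" using assms(1,2) prime_ge_2_nat[OF assms(1)] by (cases "q = 2") auto
  hence "q - 1 \<in> {1..n}" using \<open>q - 1 \<le> n\<close> by auto
  hence Omega_split: "Omega l n = ((q - 1) ^ l + 1) * R"
    unfolding Omega_def R_def by (simp add: prod.remove)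
  have "\<not> q dvd R"
  proof
    assume "q dvd R"
    hence "\<exists>a\<in>{1..n} - {q - 1}. q dvd a ^ l + 1"
      using prime_dvd_prod_iff[of "{1..n} - {q - 1}" q "\<lambda>a. a ^ l + 1"] \<open>prime q\<close>
      unfolding R_def by simp
    then obtain a where a: "a \<in> {1..n} - {q - 1}" "q dvd a ^ l + 1" by blast
    hence "a = q - 1"
      using prime_dvd_power_plus_one_imp_eq_pred[OF assms(1-4)] \<open>n \<le> 2 * q - 2\<close> by auto
    thus False using a(1) by simp
  qed
  have "[int (q - 1) ^ l = (-1) ^ l] (mod int q)"
    using \<open>q \<ge> 3\<close> by (intro cong_pow) (simp add: cong_iff_dvd_diff of_nat_diff)
  hence "int q dvd int (q - 1) ^ l + 1" using \<open>odd l\<close> by (simp add: cong_iff_dvd_diff)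
  hence "q dvd (q - 1) ^ l + 1" by (metis of_nat_1 of_nat_add of_nat_dvd_iff of_nat_power)
  hence "q dvd Omega l n" unfolding Omega_split by (rule dvd_mult2)
  moreover have "\<not> q\<^sup>2 dvd Omega l n"
  proof -
    have "coprime (q\<^sup>2) R" using prime_imp_coprime[OF \<open>prime q\<close> \<open>\<not> q dvd R\<close>] by simp
    thus ?thesis unfolding Omega_split
      using prime_square_not_dvd_pred_power_plus_one[OF assms(1,3,5)]
      by (simp only: coprime_dvd_mult_left_iff not_False_eq_True)
  qed
  ultimately show ?thesis using \<open>prime q\<close> unfolding powerful_def by blast
qed

lemma exists_prime_coprime_pred_not_dvd:
  fixes l :: nat and Q :: "nat set"
  assumes "odd l" "card (prime_factors l) < card Q"
    and prime: "\<And>q. q \<in> Q \<Longrightarrow> prime q"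
    and no_common_odd_factor: "\<And>q q' r. q \<in> Q \<Longrightarrow> q' \<in> Q \<Longrightarrow> q \<noteq> q' \<Longrightarrow> prime r \<Longrightarrow> odd r
           \<Longrightarrow> r dvd q - 1 \<Longrightarrow> \<not> r dvd q' - 1"
    and not_dvd_pred: "\<And>q q'. q \<in> Q \<Longrightarrow> q' \<in> Q \<Longrightarrow> \<not> q dvd q' - 1"
  shows "\<exists>q\<in>Q. coprime l (q - 1) \<and> \<not> q dvd l"
proof (rule ccontr)
  assume none: "\<not> ?thesis"
  have "l \<noteq> 0" using odd_pos[OF \<open>odd l\<close>] by simp
  have "\<exists>r. r \<in> prime_factors l \<and> (r dvd q - 1 \<or> r = q)" if "q \<in> Q" for q
  proof (cases "coprime l (q - 1)")
    case True
    hence "q dvd l" using none that by blast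
    thus ?thesis using prime[OF that] \<open>l \<noteq> 0\<close> by (auto simp: in_prime_factors_iff)
  next
    case False
    hence "gcd l (q - 1) \<noteq> 1" using coprime_iff_gcd_eq_1 by blast
    then obtain r where "prime r" "r dvd gcd l (q - 1)" using prime_factor_nat by blast
    thus ?thesis using \<open>l \<noteq> 0\<close> by (auto simp: in_prime_factors_iff)
  qed
  then obtain f where f: "\<And>q. q \<in> Q \<Longrightarrow> f q \<in> prime_factors l \<and> (f q dvd q - 1 \<or> f q = q)"
    by metis
  have "inj_on f Q"
  proof (rule inj_onI, rule ccontr)
    fix q q' assume q: "q \<in> Q" "q' \<in> Q" "f q = f q'" "q \<noteq> q'"
    have "prime (f q)" "f q dvd l" using f[OF q(1)] by (auto simp: in_prime_factors_iff)
    hence "odd (f q)" using \<open>odd l\<close> dvd_trans[of 2 "f q" l] by auto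
    consider "f q dvd q - 1" "f q dvd q' - 1" | "f q dvd q - 1" "f q = q'"
      | "f q = q" "f q dvd q' - 1" | "f q = q" "f q = q'"
      using f[OF q(1)] f[OF q(2)] q(3) by auto
    thus False
    proof cases
      case 1
      thus False using no_common_odd_factor[OF q(1,2,4) \<open>prime (f q)\<close> \<open>odd (f q)\<close>] by blast
    next
      case 2
      thus False using not_dvd_pred[OF q(2,1)] by simp
    next
      case 3
      thus False using not_dvd_pred[OF q(1,2)] by simp
    next
      case 4
      thus False using q(4) by simp
    qed
  qed
  hence "card Q \<le> card (prime_factors l)" using f by (intro card_inj_on_le) auto
  thus False using \<open>card (prime_factors l) < card Q\<close> by simp
qed

lemma odd_not_dvd_pred_of_le_double:
  fixes q q' :: nat
  assumes "odd q" "odd q'" "1 < q'" "q' \<le> 2 * q"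
  shows "\<not> q dvd q' - 1"
proof
  assume "q dvd q' - 1"
  then obtain c where c: "q' - 1 = q * c" by (auto simp: dvd_def)
  have "c \<noteq> 0" using c \<open>1 < q'\<close> by (cases "c = 0") auto
  moreover have "c < 2"
  proof (rule ccontr)
    assume "\<not> c < 2"
    hence "q * 2 \<le> q * c" by simp
    thus False using c \<open>q' \<le> 2 * q\<close> \<open>1 < q'\<close> by linarith
  qed
  ultimately have "c = 1" by simp
  hence "q' = q + 1" using c \<open>1 < q'\<close> by simp
  thus False using assms(1,2) by simp
qed

lemma interval_chain_cover:
  fixes lo hi :: "nat \<Rightarrow> nat"
  assumes "s \<ge> 1" and chain: "\<And>i. i \<in> {1..s-1} \<Longrightarrow> lo (i + 1) \<le> hi i + 1"
    and "lo 1 \<le> n" "n \<le> hi s"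
  shows "\<exists>i\<in>{1..s}. lo i \<le> n \<and> n \<le> hi i"
proof -
  define S where "S = {i \<in> {1..s}. lo i \<le> n}"
  have "finite S" "1 \<in> S" unfolding S_def using assms by auto
  define i where "i = Max S"
  have "i \<in> S" unfolding i_def using Max_in[OF \<open>finite S\<close>] \<open>1 \<in> S\<close> by blast
  hence i: "i \<in> {1..s}" "lo i \<le> n" unfolding S_def by auto
  have "n \<le> hi i"
  proof (rule ccontr)
    assume "\<not> n \<le> hi i"
    hence "i \<noteq> s" using \<open>n \<le> hi s\<close> by auto
    hence "i \<in> {1..s-1}" using i(1) by auto
    hence "i + 1 \<in> S" using chain[of i] \<open>\<not> n \<le> hi i\<close> unfolding S_def by auto
    thus False using Max_ge[OF \<open>finite S\<close>] unfolding i_def by fastforce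
  qed
  thus ?thesis using i by blast
qed

theorem lemma5:
  fixes l t s :: nat and p :: "nat \<Rightarrow> nat \<Rightarrow> nat"
  assumes l_pos: "l > 0" and l_odd: "odd l"
    and l_factors: "card (prime_factors l) \<le> t"
    and s_pos: "s \<ge> 1"
    and p_prime: "\<And>i j. i \<in> {1..s} \<Longrightarrow> j \<in> {1..t+1} \<Longrightarrow> prime (p i j)"
    and p_incr: "\<And>i j. i \<in> {1..s} \<Longrightarrow> j \<in> {1..t} \<Longrightarrow> p i j < p i (j+1)"
    and p_ge3: "\<And>i. i \<in> {1..s} \<Longrightarrow> p i 1 \<ge> 3"
    and p_cop: "\<And>i j k q. i \<in> {1..s} \<Longrightarrow> j \<in> {1..t+1} \<Longrightarrow> k \<in> {1..t+1} \<Longrightarrow> j \<noteq> k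
                 \<Longrightarrow> prime q \<Longrightarrow> odd q \<Longrightarrow> \<not> (q dvd p i j - 1 \<and> q dvd p i k - 1)"
    and p_chain: "\<And>i. i \<in> {1..s-1} \<Longrightarrow> p (i+1) (t+1) < 2 * p i 1"
  shows "\<forall>n::nat. p 1 (t+1) - 1 \<le> n \<and> n \<le> 2 * p s 1 - 2 \<longrightarrow> \<not> powerful (Omega l n)"
proof (intro allI impI)
  fix n assume "p 1 (t+1) - 1 \<le> n \<and> n \<le> 2 * p s 1 - 2"
  hence "\<exists>i\<in>{1..s}. p i (t+1) - 1 \<le> n \<and> n \<le> 2 * p i 1 - 2"
  proof (intro interval_chain_cover[where lo = "\<lambda>i. p i (t+1) - 1" and hi = "\<lambda>i. 2 * p i 1 - 2"])
    show "p (i + 1) (t+1) - 1 \<le> 2 * p i 1 - 2 + 1" if "i \<in> {1..s-1}" for i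
      using p_chain[OF that] by arith
  qed (use s_pos in auto)
  then obtain i where i: "i \<in> {1..s}" and window: "p i (t+1) - 1 \<le> n" "n \<le> 2 * p i 1 - 2"
    by blast
  have mono: "strict_mono_on {1..t+1} (p i)"
    by (rule strict_mono_onI, rule lift_Suc_mono_less_ivl[of "{1..t}"]) (use p_incr[OF i] in auto)
  define Q where "Q = p i ` {1..t+1}"
  have Q_bounds: "p i 1 \<le> q" "q \<le> p i (t+1)" if "q \<in> Q" for q
    using that strict_mono_on_leD[OF mono] unfolding Q_def by auto
  have Q_prime: "prime q" if "q \<in> Q" for q
    using that p_prime[OF i] unfolding Q_def by auto
  have Q_odd: "odd q" if "q \<in> Q" for q
    using Q_prime[OF that] Q_bounds(1)[OF that] p_ge3[OF i] prime_odd_nat by fastforce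
  obtain q where q: "q \<in> Q" "coprime l (q - 1)" "\<not> q dvd l"
  proof (rule exists_prime_coprime_pred_not_dvd[OF l_odd, of Q, THEN bexE])
    show "card (prime_factors l) < card Q"
      using l_factors strict_mono_on_imp_inj_on[OF mono] unfolding Q_def by (simp add: card_image)
    show "\<not> r dvd q' - 1" if "q \<in> Q" "q' \<in> Q" "q \<noteq> q'" "prime r" "odd r" "r dvd q - 1" for q q' r
      using that p_cop[OF i] unfolding Q_def by blast
    show "\<not> q dvd q' - 1" if "q \<in> Q" "q' \<in> Q" for q q'
      using that Q_odd Q_bounds window p_ge3[OF i]
      by (intro odd_not_dvd_pred_of_le_double) (force simp: Q_def)+
  qed (use Q_prime in auto)
  have "q - 1 \<le> n" "n \<le> 2 * q - 2" using Q_bounds[OF q(1)] window by arith+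
  thus "\<not> powerful (Omega l n)"
    using Omega_not_powerful[OF Q_prime[OF q(1)] Q_odd[OF q(1)] l_odd q(2,3)] by blast
qed

end
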